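(* Let $k,m$ be positive integers with $k>1$, let $\mathbf{A}$ be a finite algebra having a $k$-edge operation among its term operations, and let $F\subseteq G$ be subuniverses of $\mathbf{A}^m$. Assume $\pi_T(F)=\pi_T(G)$ for all $T\subseteq\{1,\dots,m\}$ with $|T|<k$, and $\varphi_i(G)\subseteq\varphi_i(F)$ for all $i\in\{1,\dots,m\}$. Then $F=G$.
   Context: For $k\ge 2$, a $k$-edge operation on $A$ is $t:A^{k+1}\to A$ such that for all $x,y\in A$: $t(y,y,x,x,\dots,x)=x$, $t(y,x,y,x,\dots,x)=x$, and for each $i\in\{4,\dots,k+1\}$, $t(x,\dots,x,y,x,\dots,x)=x$ with $y$ in position $i$. For $\mathbf{a}=(a_1,\dots,a_m)\in A^m$ and $T\subseteq\{1,\dots,m\}$, $\pi_T(\mathbf{a}):=(a_i)_{i\in T}$, and $\pi_T(F):=\{\pi_T(\mathbf{a}):\mathbf{a}\in F\}$. For $F\subseteq A^m$ and $i\in\{1,\dots,m\}$, $\varphi_i(F):=\{(a_i,b_i)\in A^2 : \mathbf{a},\mathbf{b}\in F,\ \pi_{\{1,\dots,i-1\}}(\mathbf{a})=\pi_{\{1,\dots,i-1\}}(\mathbf{b})\}$. *)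

theory Defs
  imports Main "HOL-Library.FuncSet"
begin

text \<open>Tuples in A^m are lists
  of length m; coordinates are indexed 0..m-1 (paper: 1..m).\<close>

definition is_algebra :: "'a set \<Rightarrow> (nat \<times> ('a list \<Rightarrow> 'a)) set \<Rightarrow> bool" where
  "is_algebra A Ops \<longleftrightarrow> A \<noteq> {} \<and>
     (\<forall>(r, f) \<in> Ops. \<forall>xs. length xs = r \<and> set xs \<subseteq> A \<longrightarrow> f xs \<in> A)"

inductive_set term_ops :: "(nat \<times> ('a list \<Rightarrow> 'a)) set \<Rightarrow> nat \<Rightarrow> ('a list \<Rightarrow> 'a) set"
  for Ops :: "(nat \<times> ('a list \<Rightarrow> 'a)) set" and n :: nat where
  proj: "i < n \<Longrightarrow> (\<lambda>xs. xs ! i) \<in> term_ops Ops n"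
| app: "(r, f) \<in> Ops \<Longrightarrow> length gs = r \<Longrightarrow> (\<forall>g \<in> set gs. g \<in> term_ops Ops n)
        \<Longrightarrow> (\<lambda>xs. f (map (\<lambda>g. g xs) gs)) \<in> term_ops Ops n"

definition is_edge_op :: "'a set \<Rightarrow> nat \<Rightarrow> ('a list \<Rightarrow> 'a) \<Rightarrow> bool" where
  "is_edge_op A k t \<longleftrightarrow> (\<forall>x\<in>A. \<forall>y\<in>A.
      t ([y, y] @ replicate (k - 1) x) = x \<and>
      t ([y, x, y] @ replicate (k - 2) x) = x \<and>
      (\<forall>j\<in>{3..k}. t ((replicate (k + 1) x)[j := y]) = x))"

definition tuples :: "'a set \<Rightarrow> nat \<Rightarrow> 'a list set" where
  "tuples A m = {xs. length xs = m \<and> set xs \<subseteq> A}"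

definition subuniverse_pow :: "'a set \<Rightarrow> (nat \<times> ('a list \<Rightarrow> 'a)) set \<Rightarrow> nat \<Rightarrow> 'a list set \<Rightarrow> bool" where
  "subuniverse_pow A Ops m F \<longleftrightarrow> F \<subseteq> tuples A m \<and>
     (\<forall>(r, f) \<in> Ops. \<forall>as. length as = r \<and> set as \<subseteq> F \<longrightarrow>
        map (\<lambda>j. f (map (\<lambda>a. a ! j) as)) [0..<m] \<in> F)"

definition proj_tuple :: "nat set \<Rightarrow> 'a list \<Rightarrow> (nat \<Rightarrow> 'a)" where
  "proj_tuple T a = (\<lambda>i\<in>T. a ! i)"

definition proj_set :: "nat set \<Rightarrow> 'a list set \<Rightarrow> (nat \<Rightarrow> 'a) set" where
  "proj_set T F = proj_tuple T ` F"

text \<open>phi i F, 0-based: pairs of i-th entries of tuples agreeing on the first i coordinates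
  (paper's phi_{i+1}).\<close>
definition phi :: "nat \<Rightarrow> 'a list set \<Rightarrow> ('a \<times> 'a) set" where
  "phi i F = {(a ! i, b ! i) | a b. a \<in> F \<and> b \<in> F \<and> take i a = take i b}"

end

theory Submission
  imports Defs
begin

(* Say that F covers G on a set S of coordinates if every tuple of G agrees
   on S with some tuple of F.  It suffices that F covers G on S = {0..<m}.  Covering of
   every S \<subseteq> {0..<m} is proved by induction on the largest coordinate N of S and, for
   fixed N, on |S|.  Sets with fewer than k elements are covered by the projection
   hypothesis.  For |S| \<ge> k and g \<in> G, the hypothesis on phi N yields f, a, b \<in> F with
   f = g below N, a = b below N, a = f at N and b = g at N; the inner induction yields
   k-1 tuples h_e \<in> F agreeing with g on S except at distinct coordinates e \<in> S - {N}.
   A fixed composition of the edge operation t (edge_combine) applied to a, b, f and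
   the h_e lies in F and agrees with g on S; at each coordinate this follows from the
   edge identities. *)

section \<open>Term operations on carriers and on subuniverses\<close>

lemma term_op_in_carrier:
  assumes alg: "is_algebra A Ops" and "f \<in> term_ops Ops n"
    and len: "length xs = n" and xs: "set xs \<subseteq> A"
  shows "f xs \<in> A"
  using assms(2)
proof (induction rule: term_ops.induct)
  case (proj i)
  then show ?case using len xs nth_mem by fastforce
next
  case (app r f gs)
  have "length (map (\<lambda>g. g xs) gs) = r" "set (map (\<lambda>g. g xs) gs) \<subseteq> A"
    using app by auto
  then show ?case using alg app.hyps(1) unfolding is_algebra_def by blast
qed

definition tapp :: "nat \<Rightarrow> ('a list \<Rightarrow> 'a) \<Rightarrow> 'a list list \<Rightarrow> 'a list" where
  "tapp m f us = map (\<lambda>j. f (map (\<lambda>u. u ! j) us)) [0..<m]"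

lemma tapp_nth: "c < m \<Longrightarrow> tapp m f us ! c = f (map (\<lambda>u. u ! c) us)"
  by (simp add: tapp_def)

lemma term_op_closed_subuniverse:
  assumes "f \<in> term_ops Ops n" and sub: "subuniverse_pow A Ops m F"
    and len: "length us = n" and us: "set us \<subseteq> F"
  shows "tapp m f us \<in> F"
  using assms(1)
proof (induction rule: term_ops.induct)
  case (proj i)
  have uF: "us ! i \<in> F" using proj len us nth_mem by blast
  hence "length (us ! i) = m" using sub by (auto simp: subuniverse_pow_def tuples_def)
  hence "tapp m (\<lambda>xs. xs ! i) us = us ! i"
    using proj len by (intro nth_equalityI) (auto simp: tapp_def)
  then show ?case using uF by simp
next
  case (app r f gs)
  define as where "as = map (\<lambda>g. tapp m g us) gs"
  have "set as \<subseteq> F" "length as = r" using app by (auto simp: as_def)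
  hence "map (\<lambda>j. f (map (\<lambda>a. a ! j) as)) [0..<m] \<in> F"
    using sub app.hyps(1) unfolding subuniverse_pow_def by blast
  moreover have "tapp m (\<lambda>xs. f (map (\<lambda>g. g xs) gs)) us
      = map (\<lambda>j. f (map (\<lambda>a. a ! j) as)) [0..<m]"
    unfolding tapp_def as_def by (rule map_cong) (simp_all add: comp_def)
  ultimately show ?case by simp
qed

section \<open>Consequences of the edge identities\<close>

definition near_const :: "'a \<Rightarrow> 'a list \<Rightarrow> bool" where
  "near_const x vs \<longleftrightarrow> (\<forall>i<length vs. \<forall>j<length vs. vs ! i \<noteq> x \<longrightarrow> vs ! j \<noteq> x \<longrightarrow> i = j)"

lemma near_const_Cons_same:
  assumes nc: "near_const x (x # vs)"
  shows "near_const x vs"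
  unfolding near_const_def
proof (intro allI impI)
  fix i j assume "i < length vs" "j < length vs" "vs ! i \<noteq> x" "vs ! j \<noteq> x"
  then have "Suc i = Suc j"
    using nc unfolding near_const_def by (metis Suc_less_eq length_Cons nth_Cons_Suc)
  then show "i = j" by simp
qed

lemma near_const_Cons_other:
  assumes nc: "near_const x (y # vs)" and y: "y \<noteq> x"
  shows "vs = replicate (length vs) x"
proof (rule nth_equalityI)
  fix i assume i: "i < length vs"
  have "vs ! i = x"
  proof (rule ccontr)
    assume "vs ! i \<noteq> x"
    then have "(0::nat) = Suc i"
      using nc y i unfolding near_const_def
      by (metis Suc_less_eq length_Cons nth_Cons_0 nth_Cons_Suc zero_less_Suc)
    then show False by simp
  qed
  then show "vs ! i = replicate (length vs) x ! i" using i by simp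
qed simp

lemma near_const_map_distinct:
  assumes "distinct cs" and "\<And>e. e \<in> set cs \<Longrightarrow> e \<noteq> c \<Longrightarrow> v e = x"
  shows "near_const x (map v cs)"
  unfolding near_const_def
proof (intro allI impI)
  have at_c: "cs ! i = c" if "i < length cs" "v (cs ! i) \<noteq> x" for i
    using assms(2) that nth_mem by blast
  fix i j assume "i < length (map v cs)" "j < length (map v cs)"
    and "map v cs ! i \<noteq> x" "map v cs ! j \<noteq> x"
  then show "i = j" using at_c assms(1) nth_eq_iff_index_eq by (metis length_map nth_map)
qed

context
  fixes A :: "'a set" and k :: nat and t :: "'a list \<Rightarrow> 'a"
  assumes edge: "is_edge_op A k t" and k_gt1: "k > 1"
begin

lemma edge_first: "x \<in> A \<Longrightarrow> y \<in> A \<Longrightarrow> t ([y, y, x] @ replicate (k - 2) x) = x"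
proof -
  assume "x \<in> A" "y \<in> A"
  hence "t ([y, y] @ replicate (k - 1) x) = x" using edge by (simp add: is_edge_op_def)
  moreover have "k - 1 = Suc (k - 2)" using k_gt1 by simp
  ultimately show ?thesis by simp
qed

lemma edge_second: "x \<in> A \<Longrightarrow> y \<in> A \<Longrightarrow> t ([y, x, y] @ replicate (k - 2) x) = x"
  using edge by (simp add: is_edge_op_def)

lemma edge_near_unanimous:
  assumes x: "x \<in> A" and len: "length ws = k - 2" and wsA: "set ws \<subseteq> A"
    and nc: "near_const x ws"
  shows "t ([x, x, x] @ ws) = x"
proof (cases "\<forall>i<k-2. ws ! i = x")
  case True
  then have "ws = replicate (k - 2) x" by (intro nth_equalityI) (auto simp: len)
  then show ?thesis using edge_first[OF x x] by simp
next
  case False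
  then obtain i where i: "i < k - 2" "ws ! i \<noteq> x" by auto
  define z where "z = ws ! i"
  have z: "z \<in> A" using i len wsA nth_mem unfolding z_def by fastforce
  have "ws = (replicate (k - 2) x)[i := z]"
    using i nc len unfolding near_const_def z_def by (intro nth_equalityI) (auto simp: nth_list_update)
  moreover have "k + 1 = Suc (Suc (Suc (k - 2)))" using k_gt1 by simp
  ultimately have args: "[x, x, x] @ ws = (replicate (k + 1) x)[Suc (Suc (Suc i)) := z]"
    by (simp only: replicate_Suc list_update_code append.simps)
  have "Suc (Suc (Suc i)) \<in> {3..k}" using i by auto
  then have "t ((replicate (k + 1) x)[Suc (Suc (Suc i)) := z]) = x"
    using edge x z unfolding is_edge_op_def by blast
  then show ?thesis unfolding args .
qed

end

section \<open>The edge composition\<close>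

definition edge_combine :: "('b list \<Rightarrow> 'b) \<Rightarrow> 'b \<Rightarrow> 'b \<Rightarrow> 'b \<Rightarrow> 'b \<Rightarrow> 'b list \<Rightarrow> 'b" where
  "edge_combine T a b f e hs =
     T ([T ([a, a, f] @ replicate (length hs) e), T ([a, b, f] @ replicate (length hs) e),
         T ([f, f, f] @ hs)] @ hs)"

lemma edge_combine_nth:
  "c < m \<Longrightarrow> edge_combine (tapp m t) a b f e hs ! c
     = edge_combine t (a ! c) (b ! c) (f ! c) (e ! c) (map (\<lambda>u. u ! c) hs)"
  by (simp add: edge_combine_def tapp_nth)

lemma edge_combine_closed:
  assumes "t \<in> term_ops Ops (k + 1)" and "subuniverse_pow A Ops m F" and "k > 1"
    and "a \<in> F" "b \<in> F" "f \<in> F" "e \<in> F" and "set hs \<subseteq> F" and "length hs = k - 2"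
  shows "edge_combine (tapp m t) a b f e hs \<in> F"
proof -
  have cl: "tapp m t us \<in> F" if "length us = k + 1" "set us \<subseteq> F" for us
    using term_op_closed_subuniverse[OF assms(1,2) that] .
  have "Suc (Suc (k - 2)) = k" using \<open>k > 1\<close> by simp
  then show ?thesis using assms unfolding edge_combine_def by (auto intro!: cl simp: subset_iff)
qed

context
  fixes A :: "'a set" and Ops :: "(nat \<times> ('a list \<Rightarrow> 'a)) set" and k :: nat and t :: "'a list \<Rightarrow> 'a"
  assumes alg: "is_algebra A Ops" and t_term: "t \<in> term_ops Ops (k + 1)"
    and edge: "is_edge_op A k t" and k_gt1: "k > 1"
begin

text \<open>Needed because the edge identities only hold for arguments in A.\<close>
lemma edge_op_in_carrier: "length xs = k + 1 \<Longrightarrow> set xs \<subseteq> A \<Longrightarrow> t xs \<in> A"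
  using term_op_in_carrier[OF alg t_term] .

text \<open>At the new coordinate: a = f = y, b = x and all h's equal x.\<close>
lemma edge_combine_pivot:
  assumes "x \<in> A" "y \<in> A"
  shows "edge_combine t y x y x (replicate (k - 2) x) = x"
proof -
  have "t ([y, y, y] @ replicate (k - 2) x) \<in> A"
    using assms k_gt1 by (intro edge_op_in_carrier) auto
  then show ?thesis using assms edge_second[OF edge k_gt1] unfolding edge_combine_def by simp
qed

text \<open>At an old coordinate: a = b, f = x and the h's agree with x in all but one place.\<close>
lemma edge_combine_off_pivot:
  assumes x: "x \<in> A" and a: "a \<in> A" and e: "e \<in> A" and hsA: "set hs \<subseteq> A"
    and len: "length hs = k - 2" and nc: "near_const x (e # hs)"
  shows "edge_combine t a a x e hs = x"
proof (cases "e = x")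
  case True
  have "near_const x hs" using nc unfolding True by (rule near_const_Cons_same)
  then have "t ([x, x, x] @ hs) = x" using edge_near_unanimous[OF edge k_gt1 x len hsA] by blast
  then show ?thesis using True len edge_first[OF edge k_gt1 x a] unfolding edge_combine_def by simp
next
  case False
  have rep: "hs = replicate (k - 2) x" using near_const_Cons_other[OF nc False] unfolding len .
  have "t ([a, a, x] @ replicate (k - 2) e) \<in> A"
    using x a e k_gt1 by (intro edge_op_in_carrier) auto
  then show ?thesis using rep x edge_first[OF edge k_gt1] unfolding edge_combine_def by simp
qed

end

section \<open>Covering G by F on sets of coordinates\<close>

text \<open>F covers G on S: every tuple of G agrees on the coordinates S with a tuple of F,
  i.e. the projection of G to S is contained in that of F.\<close>
definition covers :: "'a list set \<Rightarrow> 'a list set \<Rightarrow> nat set \<Rightarrow> bool" where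
  "covers F G S \<longleftrightarrow> (\<forall>g\<in>G. \<exists>f\<in>F. \<forall>c\<in>S. f ! c = g ! c)"

lemma covers_if_proj_eq:
  assumes eq: "proj_set S F = proj_set S G"
  shows "covers F G S"
  unfolding covers_def
proof
  fix g assume "g \<in> G"
  then obtain f where "f \<in> F" "proj_tuple S f = proj_tuple S g"
    using eq unfolding proj_set_def by (metis imageE imageI)
  then show "\<exists>f\<in>F. \<forall>c\<in>S. f ! c = g ! c"
    unfolding proj_tuple_def by (metis restrict_apply')
qed

lemma covers_all_subset:
  assumes "covers F G {0..<m}" and "F \<subseteq> tuples A m" and "G \<subseteq> tuples A m"
  shows "G \<subseteq> F"
proof
  fix g assume g: "g \<in> G"
  then obtain f where "f \<in> F" "\<forall>c\<in>{0..<m}. f ! c = g ! c"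
    using assms(1) by (auto simp: covers_def)
  moreover have "f = g"
    using calculation g assms(2,3) by (intro nth_equalityI) (auto simp: tuples_def)
  ultimately show "g \<in> F" by simp
qed

text \<open>The setting of the theorem, with a chosen k-edge term operation t.\<close>
locale edge_extension =
  fixes A :: "'a set" and Ops :: "(nat \<times> ('a list \<Rightarrow> 'a)) set" and k :: nat
    and t :: "'a list \<Rightarrow> 'a" and m :: nat and F G :: "'a list set"
  assumes alg: "is_algebra A Ops" and k_gt1: "k > 1"
    and t_term: "t \<in> term_ops Ops (k + 1)" and t_edge: "is_edge_op A k t"
    and F_sub: "subuniverse_pow A Ops m F" and G_tuples: "G \<subseteq> tuples A m" and F_G: "F \<subseteq> G"
    and small_proj: "\<forall>T. T \<subseteq> {0..<m} \<and> card T < k \<longrightarrow> proj_set T F = proj_set T G"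
    and phi_incl: "\<forall>i<m. phi i G \<subseteq> phi i F"
begin

lemma F_tuples: "F \<subseteq> tuples A m"
  using F_sub by (simp add: subuniverse_pow_def)

lemma component_in_carrier: "u \<in> F \<Longrightarrow> c < m \<Longrightarrow> u ! c \<in> A"
  using F_tuples nth_mem by (fastforce simp: tuples_def)

lemma covers_small: "S \<subseteq> {0..<m} \<Longrightarrow> card S < k \<Longrightarrow> covers F G S"
  by (rule covers_if_proj_eq) (simp add: small_proj)

text \<open>Using phi N G \<subseteq> phi N F: a tuple f \<in> F matching g below N, together with a pair
  a, b \<in> F that agree below N and whose N-th entries are those of f and g.\<close>
lemma pivot_witnesses:
  assumes prefix: "covers F G {0..<N}" and N: "N < m" and g: "g \<in> G"
  obtains f a b where "f \<in> F" "a \<in> F" "b \<in> F"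
    and "\<And>c. c < N \<Longrightarrow> f ! c = g ! c \<and> a ! c = b ! c"
    and "a ! N = f ! N" and "b ! N = g ! N"
proof -
  obtain f where f: "f \<in> F" "\<forall>c\<in>{0..<N}. f ! c = g ! c" using prefix g by (auto simp: covers_def)
  have "length f = m" "length g = m" using f(1) g F_tuples G_tuples by (auto simp: tuples_def)
  then have "take N f = take N g" using f(2) N by (intro nth_equalityI) auto
  hence "(f ! N, g ! N) \<in> phi N G" unfolding phi_def using f(1) F_G g by blast
  hence "(f ! N, g ! N) \<in> phi N F" using phi_incl N by blast
  then obtain a b
    where ab: "a \<in> F" "b \<in> F" "take N a = take N b" "a ! N = f ! N" "b ! N = g ! N"
    unfolding phi_def by auto
  have "f ! c = g ! c \<and> a ! c = b ! c" if "c < N" for c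
    using that f(2) ab(3) by (metis atLeastLessThan_iff le0 nth_take)
  then show ?thesis using that f(1) ab by blast
qed

lemma edge_combine_agrees:
  assumes g: "g \<in> G" and c: "c \<in> S" and S: "S \<subseteq> {0..<Suc N}" and N: "N < m"
    and fa: "f \<in> F" "a \<in> F" and below: "\<And>c. c < N \<Longrightarrow> f ! c = g ! c \<and> a ! c = b ! c"
    and piv: "a ! N = f ! N" "b ! N = g ! N"
    and dist: "distinct (d # ds)" and es: "set (d # ds) \<subseteq> S - {N}" and len: "length ds = k - 2"
    and h: "\<And>e. e \<in> set (d # ds) \<Longrightarrow> h e \<in> F \<and> (\<forall>c\<in>S - {e}. h e ! c = g ! c)"
  shows "edge_combine (tapp m t) a b f (h d) (map h ds) ! c = g ! c"
proof -
  have cm: "c < m" using c S N by auto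
  have gc: "g ! c \<in> A" using g cm G_tuples nth_mem by (fastforce simp: tuples_def)
  have hc: "h e ! c = g ! c" if "e \<in> set (d # ds)" "e \<noteq> c" for e
    using h that c by blast
  have hA: "h e ! c \<in> A" if "e \<in> set (d # ds)" for e
    using h that cm component_in_carrier by blast
  have comb: "edge_combine (tapp m t) a b f (h d) (map h ds) ! c
      = edge_combine t (a ! c) (b ! c) (f ! c) (h d ! c) (map (\<lambda>e. h e ! c) ds)"
    by (simp only: edge_combine_nth[OF cm] map_map comp_def)
  show ?thesis
  proof (cases "c = N")
    case True
    have "\<forall>e\<in>set (d # ds). e \<noteq> c" using es True by auto
    then have "map (\<lambda>e. h e ! c) ds = map (\<lambda>_. g ! c) ds" "h d ! c = g ! c" using hc by auto
    then have "map (\<lambda>e. h e ! c) ds = replicate (k - 2) (g ! c)" "h d ! c = g ! c"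
      using len by (simp_all add: map_replicate_const)
    moreover have "f ! c \<in> A" using fa(1) cm component_in_carrier by blast
    ultimately show ?thesis
      using comb piv True edge_combine_pivot[OF alg t_term t_edge k_gt1 gc] by simp
  next
    case False
    then have "c < N" using c S by auto
    then have old: "b ! c = a ! c" "f ! c = g ! c" using below by auto
    have "near_const (g ! c) (map (\<lambda>e. h e ! c) (d # ds))"
      by (rule near_const_map_distinct[OF dist]) (rule hc)
    then have nc: "near_const (g ! c) (h d ! c # map (\<lambda>e. h e ! c) ds)" by simp
    have hsA: "set (map (\<lambda>e. h e ! c) ds) \<subseteq> A" and hdA: "h d ! c \<in> A" using hA by auto
    have aA: "a ! c \<in> A" using fa(2) cm component_in_carrier by blast
    have "length (map (\<lambda>e. h e ! c) ds) = k - 2" using len by simp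
    from edge_combine_off_pivot[OF alg t_term t_edge k_gt1 gc aA hdA hsA this nc]
    show ?thesis using comb old by simp
  qed
qed

lemma covers_step:
  assumes S: "S \<subseteq> {0..<Suc N}" "N \<in> S" and N: "N < m" and big: "k \<le> card S"
    and prefix: "covers F G {0..<N}" and drop: "\<And>e. e \<in> S - {N} \<Longrightarrow> covers F G (S - {e})"
  shows "covers F G S"
proof -
  have "finite S" using S(1) finite_subset by blast
  hence "k - 1 \<le> card (S - {N})" using big S(2) by simp
  then obtain D where D: "D \<subseteq> S - {N}" "card D = k - 1" by (meson obtain_subset_with_card_n)
  have "finite D" using D(1) \<open>finite S\<close> finite_subset by blast
  have "length (sorted_list_of_set D) = k - 1" using D(2) by simp
  then obtain d ds where cs: "sorted_list_of_set D = d # ds" and len: "length ds = k - 2"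
    using k_gt1 by (cases "sorted_list_of_set D") auto
  have dist: "distinct (d # ds)" and es: "set (d # ds) \<subseteq> S - {N}"
    using D \<open>finite D\<close> by (metis cs distinct_sorted_list_of_set, metis cs set_sorted_list_of_set)
  show ?thesis unfolding covers_def
  proof
    fix g assume g: "g \<in> G"
    obtain f a b where fab: "f \<in> F" "a \<in> F" "b \<in> F"
      and below: "\<And>c. c < N \<Longrightarrow> f ! c = g ! c \<and> a ! c = b ! c"
      and piv: "a ! N = f ! N" "b ! N = g ! N" using pivot_witnesses[OF prefix N g] by blast
    have "\<forall>e\<in>S - {N}. \<exists>h\<in>F. \<forall>c\<in>S - {e}. h ! c = g ! c"
      using drop g by (auto simp: covers_def)
    then obtain h where h: "\<And>e. e \<in> S - {N} \<Longrightarrow> h e \<in> F \<and> (\<forall>c\<in>S - {e}. h e ! c = g ! c)"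
      by metis
    then have h': "\<And>e. e \<in> set (d # ds) \<Longrightarrow> h e \<in> F \<and> (\<forall>c\<in>S - {e}. h e ! c = g ! c)"
      using es by blast
    have "edge_combine (tapp m t) a b f (h d) (map h ds) \<in> F"
      using fab h' len k_gt1 by (intro edge_combine_closed[OF t_term F_sub]) auto
    moreover have "\<forall>c\<in>S. edge_combine (tapp m t) a b f (h d) (map h ds) ! c = g ! c"
      using edge_combine_agrees[OF g _ S(1) N fab(1,2) below piv dist es len h'] by blast
    ultimately show "\<exists>f\<in>F. \<forall>c\<in>S. f ! c = g ! c" by blast
  qed
qed

lemma covers_with_top:
  assumes below: "\<And>S. S \<subseteq> {0..<N} \<Longrightarrow> covers F G S" and N: "N < m"
  shows "S \<subseteq> {0..<Suc N} \<Longrightarrow> covers F G S"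
proof (induction "card S" arbitrary: S rule: less_induct)
  case less
  show ?case
  proof (cases "N \<in> S")
    case False
    then have "S \<subseteq> {0..<N}" using less.prems by (auto simp: less_Suc_eq)
    then show ?thesis by (rule below)
  next
    case True
    show ?thesis
    proof (cases "card S < k")
      case True
      moreover have "S \<subseteq> {0..<m}" using less.prems N by auto
      ultimately show ?thesis by (rule covers_small[rotated])
    next
      case False
      have "finite S" using less.prems finite_subset by blast
      have drop: "covers F G (S - {e})" if "e \<in> S - {N}" for e
      proof -
        have "e \<in> S" using that by simp
        then have "card (S - {e}) < card S" by (rule card_Diff1_less[OF \<open>finite S\<close>])
        moreover have "S - {e} \<subseteq> {0..<Suc N}" using less.prems by blast
        ultimately show ?thesis using less.hyps by blast
      qed
      have "k \<le> card S" using False by simp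
      then show ?thesis using covers_step[OF less.prems True N _ below drop] by blast
    qed
  qed
qed

lemma covers_prefix: "N \<le> m \<Longrightarrow> S \<subseteq> {0..<N} \<Longrightarrow> covers F G S"
proof (induction N arbitrary: S)
  case 0
  then show ?case using covers_small k_gt1 by simp
next
  case (Suc N)
  then have "N < m" and "\<And>S. S \<subseteq> {0..<N} \<Longrightarrow> covers F G S" by simp_all
  then show ?case using covers_with_top Suc.prems(2) by blast
qed

end

theorem lemma4p1:
  fixes A :: "'a set" and Ops :: "(nat \<times> ('a list \<Rightarrow> 'a)) set" and k m :: nat
    and F G :: "'a list set"
  assumes "k > 1" and "m > 0"
    and "is_algebra A Ops" and "finite A"
    and "\<exists>t \<in> term_ops Ops (k + 1). is_edge_op A k t"
    and "subuniverse_pow A Ops m F" and "subuniverse_pow A Ops m G" and "F \<subseteq> G"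
    and "\<forall>T. T \<subseteq> {0..<m} \<and> card T < k \<longrightarrow> proj_set T F = proj_set T G"
    and "\<forall>i < m. phi i G \<subseteq> phi i F"
  shows "F = G"
proof -
  obtain t where t: "t \<in> term_ops Ops (k + 1)" "is_edge_op A k t" using assms(5) by blast
  have G_tuples: "G \<subseteq> tuples A m" using assms(7) by (simp add: subuniverse_pow_def)
  interpret edge_extension A Ops k t m F G
    using assms t G_tuples by unfold_locales auto
  have "covers F G {0..<m}" using covers_prefix by blast
  then have "G \<subseteq> F" using covers_all_subset F_tuples G_tuples by blast
  then show ?thesis using assms(8) by blast
qed

end
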